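(* Let $K\ge 1$ be an integer. Every element $P$ of $LD_K$ admits a unique factorisation into linear dendrons with $K$ rhizomes: if $P=F_1\times\cdots\times F_N=G_1\times\cdots\times G_M$ where all $F_i$ and $G_j$ are linear dendrons with $K$ rhizomes, then $N=M$ and the multisets $\{\{F_1,\dots,F_N\}\}$ and $\{\{G_1,\dots,G_M\}\}$ are equal (up to isomorphism).
   Context: A finite dynamical system (FDS) is a function $A:S_A\to S_A$ on a finite set, considered up to isomorphism of functional graphs (arcs $x\to A(x)$). The product $AB$ is the function on $S_A\times S_B$, $(a,b)\mapsto(A(a),B(b))$. A dendron is an FDS with connected functional graph and a fixpoint. A predecessor of a state $s$ is a state $t$ with $A(t)=s$ (the fixpoint is a predecessor of itself). A linear dendron is a dendron in which every state other than the fixpoint has at most one predecessor; it has $K$ rhizomes if its fixpoint has exactly $K$ predecessors other than itself. $LD_K$ is the multiplicative monoid generated (under the product of FDSs) by the linear dendrons with $K$ rhizomes. *)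

theory Defs
  imports Main
begin

text \<open>A finite dynamical system (FDS) is represented by a pair (S, f) with S a finite
set of states and f a function mapping S into S (values of f outside S are irrelevant).\<close>

type_synonym 'a fds = "'a set \<times> ('a \<Rightarrow> 'a)"

definition is_fds :: "'a fds \<Rightarrow> bool" where
  "is_fds A \<longleftrightarrow> finite (fst A) \<and> (\<forall>x\<in>fst A. snd A x \<in> fst A)"

definition fds_iso :: "'a fds \<Rightarrow> 'b fds \<Rightarrow> bool" where
  "fds_iso A B \<longleftrightarrow> (\<exists>h. bij_betw h (fst A) (fst B) \<and>
      (\<forall>x\<in>fst A. h (snd A x) = snd B (h x)))"

definition fds_arcs :: "'a fds \<Rightarrow> ('a \<times> 'a) set" where
  "fds_arcs A = {(x, snd A x) | x. x \<in> fst A}"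

definition fds_connected :: "'a fds \<Rightarrow> bool" where
  "fds_connected A \<longleftrightarrow> fst A \<noteq> {} \<and>
     (\<forall>x\<in>fst A. \<forall>y\<in>fst A. (x, y) \<in> (fds_arcs A \<union> (fds_arcs A)\<inverse>)\<^sup>*)"

definition predecessors :: "'a fds \<Rightarrow> 'a \<Rightarrow> 'a set" where
  "predecessors A s = {t \<in> fst A. snd A t = s}"

definition dendron :: "'a fds \<Rightarrow> bool" where
  "dendron A \<longleftrightarrow> is_fds A \<and> fds_connected A \<and> (\<exists>r\<in>fst A. snd A r = r)"

definition linear_dendron :: "nat \<Rightarrow> 'a fds \<Rightarrow> bool" where
  "linear_dendron K A \<longleftrightarrow> dendron A \<and>
     (\<exists>r\<in>fst A. snd A r = r \<and>
        (\<forall>s\<in>fst A. s \<noteq> r \<longrightarrow> card (predecessors A s) \<le> 1) \<and>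
        card (predecessors A r - {r}) = K)"

definition fds_prod :: "'a fds list \<Rightarrow> 'a list fds" where
  "fds_prod Fs = ({xs. length xs = length Fs \<and> (\<forall>i<length Fs. xs ! i \<in> fst (Fs ! i))},
                  \<lambda>xs. map (\<lambda>(F, x). snd F x) (zip Fs xs))"

end

theory Submission
  imports Defs "HOL-Computational_Algebra.Polynomial" "HOL-Combinatorics.List_Permutation"
begin

text \<open>
  For parameters s, c, J put
  phi A = sum over states x of indeg (f x)^s * prod_{j=1..J} indeg (f^j x)^c.
  This is an isomorphism invariant, and it is multiplicative for products because in-degrees
  multiply there. In a linear dendron with K rhizomes the in-degree of an image f x is K + 1 if
  f x is the root and 1 otherwise, so with B = (K + 1)^c one gets phi = (K + 1)^(s+1) * B^J + code,
  where code = sum of B^(v y) over the states y not mapped to the root, and v y counts the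
  j in {1..J} with f^j y the root. Hence for every s the products of the linear polynomials
  X + code F_i and X + code G_j agree at X = (K + 1)^(s+1) * B^J, so the multisets of codes
  coincide. For B and J large, uniqueness of base-B expansions recovers from a code the number
  of states that reach the root in n steps, for every n, and these numbers determine a linear
  dendron up to isomorphism: peel off a longest branch and induct.
\<close>

lemma funpow_closed: "(\<And>x. x \<in> S \<Longrightarrow> f x \<in> S) \<Longrightarrow> x \<in> S \<Longrightarrow> (f ^^ n) x \<in> S"
  by (induction n) auto

lemma is_fds_funpow: "is_fds A \<Longrightarrow> x \<in> fst A \<Longrightarrow> (snd A ^^ n) x \<in> fst A"
  by (rule funpow_closed) (auto simp: is_fds_def)

lemma funpow_fixed: "f x = x \<Longrightarrow> (f ^^ n) x = x"
  by (induction n) simp_all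

lemma funpow_funpow: "(f ^^ m) ((f ^^ n) x) = (f ^^ (m + n)) x"
  by (simp add: funpow_add)

lemma inj_on_funpow_until_hit:
  fixes f :: "'a \<Rightarrow> 'a"
  assumes hit: "(f ^^ n) x = r" and before: "\<forall>j<n. (f ^^ j) x \<noteq> r"
  shows "inj_on (\<lambda>j. (f ^^ j) x) {..n}"
proof -
  have False if "i < j" "j \<le> n" "(f ^^ i) x = (f ^^ j) x" for i j
  proof -
    have "(f ^^ (n - j + i)) x = (f ^^ (n - j)) ((f ^^ i) x)"
      by (simp add: funpow_funpow)
    also have "\<dots> = (f ^^ (n - j)) ((f ^^ j) x)"
      using that by simp
    also have "\<dots> = r"
      using that hit by (simp add: funpow_funpow)
    finally show False
      using before that by simp
  qed
  then show ?thesis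
    by (intro inj_onI) (metis atMost_iff linorder_neqE_nat)
qed

lemma bij_betw_the_inv_into_comp:
  assumes "inj_on a I" and "inj_on b I"
  shows "bij_betw (\<lambda>x. b (the_inv_into I a x)) (a ` I) (b ` I)"
proof -
  have "bij_betw (b \<circ> the_inv_into I a) (a ` I) (b ` I)"
    using assms by (intro bij_betw_trans[of _ _ I] bij_betw_the_inv_into) (auto simp: bij_betw_def)
  then show ?thesis
    by (simp add: comp_def)
qed

section \<open>The invariant phi\<close>

definition indeg :: "'a fds \<Rightarrow> 'a \<Rightarrow> nat" where
  "indeg A u = card (predecessors A u)"

definition weight :: "nat \<Rightarrow> nat \<Rightarrow> nat \<Rightarrow> 'a fds \<Rightarrow> 'a \<Rightarrow> nat" where
  "weight s c J A x = indeg A (snd A x) ^ s * (\<Prod>j\<in>{1..J}. indeg A ((snd A ^^ j) x) ^ c)"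

definition phi :: "nat \<Rightarrow> nat \<Rightarrow> nat \<Rightarrow> 'a fds \<Rightarrow> nat" where
  "phi s c J A = (\<Sum>x\<in>fst A. weight s c J A x)"

context
  fixes A :: "'a fds" and B :: "'b fds" and h :: "'a \<Rightarrow> 'b"
  assumes fds: "is_fds A"
    and bij: "bij_betw h (fst A) (fst B)"
    and comm: "\<forall>x\<in>fst A. h (snd A x) = snd B (h x)"
begin

lemma iso_funpow: "x \<in> fst A \<Longrightarrow> (snd B ^^ n) (h x) = h ((snd A ^^ n) x)"
  by (induction n) (simp_all add: comm is_fds_funpow[OF fds])

lemma iso_predecessors:
  assumes u: "u \<in> fst A"
  shows "predecessors B (h u) = h ` predecessors A u"
proof
  show "h ` predecessors A u \<subseteq> predecessors B (h u)"
    using bij comm by (auto simp: predecessors_def bij_betw_def)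
  show "predecessors B (h u) \<subseteq> h ` predecessors A u"
  proof
    fix z
    assume "z \<in> predecessors B (h u)"
    then have "z \<in> h ` fst A" and "snd B z = h u"
      using bij by (auto simp: predecessors_def bij_betw_def)
    then obtain x where x: "x \<in> fst A" "z = h x" and "snd B (h x) = h u"
      by blast
    then have "h (snd A x) = h u"
      using comm by simp
    then have "snd A x = u"
      using x(1) bij fds u by (auto simp: bij_betw_def inj_on_def is_fds_def)
    then show "z \<in> h ` predecessors A u"
      using x by (auto simp: predecessors_def)
  qed
qed

lemma iso_indeg: "u \<in> fst A \<Longrightarrow> indeg B (h u) = indeg A u"
  unfolding indeg_def iso_predecessors
  by (rule card_image) (use bij in \<open>auto simp: bij_betw_def predecessors_def intro: inj_on_subset\<close>)

lemma iso_weight: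
  assumes x: "x \<in> fst A"
  shows "weight s c J B (h x) = weight s c J A x"
proof -
  have "snd B (h x) = h (snd A x)" "snd A x \<in> fst A"
    using x comm fds by (auto simp: is_fds_def)
  then have "indeg B (snd B (h x)) = indeg A (snd A x)"
    by (simp add: iso_indeg)
  moreover have "indeg B ((snd B ^^ j) (h x)) = indeg A ((snd A ^^ j) x)" for j
    using x by (simp add: iso_funpow iso_indeg is_fds_funpow[OF fds])
  ultimately show ?thesis
    by (simp add: weight_def)
qed

end

lemma phi_iso:
  assumes "is_fds A" and "fds_iso A B"
  shows "phi s c J A = phi s c J B"
proof -
  obtain h where bij: "bij_betw h (fst A) (fst B)" and comm: "\<forall>x\<in>fst A. h (snd A x) = snd B (h x)"
    using assms(2) unfolding fds_iso_def by blast
  have "phi s c J B = (\<Sum>x\<in>fst A. weight s c J B (h x))"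
    unfolding phi_def using sum.reindex_bij_betw[OF bij, of "weight s c J B"] by simp
  also have "\<dots> = phi s c J A"
    unfolding phi_def using iso_weight[OF assms(1) bij comm] by simp
  finally show ?thesis by simp
qed

lemma fds_prod_Nil: "fds_prod [] = ({[]}, \<lambda>_. [])"
  by (auto simp: fds_prod_def)

lemma fds_prod_Cons_states:
  "fst (fds_prod (F # Fs)) = (\<lambda>(x, xs). x # xs) ` (fst F \<times> fst (fds_prod Fs))"
proof -
  have "xs \<in> fst (fds_prod (F # Fs)) \<longleftrightarrow> xs \<in> (\<lambda>(x, xs). x # xs) ` (fst F \<times> fst (fds_prod Fs))" for xs
  proof (cases xs)
    case (Cons y ys)
    have "(\<forall>i<Suc (length Fs). (y # ys) ! i \<in> fst ((F # Fs) ! i)) \<longleftrightarrow>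
          y \<in> fst F \<and> (\<forall>i<length Fs. ys ! i \<in> fst (Fs ! i))"
      by (auto simp: All_less_Suc2)
    then show ?thesis
      using Cons by (auto simp: fds_prod_def)
  qed (auto simp: fds_prod_def)
  then show ?thesis by blast
qed

lemma fds_prod_Cons_apply: "snd (fds_prod (F # Fs)) (x # xs) = snd F x # snd (fds_prod Fs) xs"
  by (simp add: fds_prod_def)

lemma fds_prod_Cons_funpow:
  "(snd (fds_prod (F # Fs)) ^^ n) (x # xs) = (snd F ^^ n) x # (snd (fds_prod Fs) ^^ n) xs"
  by (induction n) (simp_all add: fds_prod_Cons_apply)

lemma predecessors_fds_prod_Cons:
  "predecessors (fds_prod (F # Fs)) (y # ys) =
   (\<lambda>(x, xs). x # xs) ` (predecessors F y \<times> predecessors (fds_prod Fs) ys)"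
  unfolding predecessors_def fds_prod_Cons_states by (auto simp: fds_prod_Cons_apply)

lemma inj_on_Cons_pairs: "inj_on (\<lambda>(x, xs). x # xs) S"
  by (auto simp: inj_on_def)

lemma indeg_fds_prod_Cons:
  "indeg (fds_prod (F # Fs)) (y # ys) = indeg F y * indeg (fds_prod Fs) ys"
  unfolding indeg_def predecessors_fds_prod_Cons
  by (simp add: card_image[OF inj_on_Cons_pairs] card_cartesian_product)

lemma weight_fds_prod_Cons:
  "weight s c J (fds_prod (F # Fs)) (x # xs) = weight s c J F x * weight s c J (fds_prod Fs) xs"
  by (simp add: weight_def fds_prod_Cons_apply fds_prod_Cons_funpow indeg_fds_prod_Cons
      power_mult_distrib prod.distrib)

lemma phi_fds_prod: "phi s c J (fds_prod Fs) = (\<Prod>F\<leftarrow>Fs. phi s c J F)"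
proof (induction Fs)
  case Nil
  have "((\<lambda>_. [] :: 'a list) ^^ n) ([] :: 'a list) = []" for n
    by (rule funpow_fixed) simp
  moreover have "indeg ({[]}, \<lambda>_. []) ([] :: 'a list) = 1"
    by (simp add: indeg_def predecessors_def)
  ultimately show ?case
    by (simp add: phi_def weight_def fds_prod_Nil)
next
  case (Cons F Fs)
  have "phi s c J (fds_prod (F # Fs)) =
      (\<Sum>(x, xs)\<in>fst F \<times> fst (fds_prod Fs). weight s c J F x * weight s c J (fds_prod Fs) xs)"
    unfolding phi_def fds_prod_Cons_states sum.reindex[OF inj_on_Cons_pairs]
    by (rule sum.cong) (auto simp: weight_fds_prod_Cons)
  also have "\<dots> = phi s c J F * phi s c J (fds_prod Fs)"
    unfolding phi_def by (simp add: sum_product sum.cartesian_product)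
  finally show ?case using Cons.IH by simp
qed

lemma is_fds_fds_prod: "\<forall>F\<in>set Fs. is_fds F \<Longrightarrow> is_fds (fds_prod Fs)"
proof (induction Fs)
  case (Cons F Fs)
  then have "is_fds F" "is_fds (fds_prod Fs)"
    by auto
  then show ?case
    unfolding is_fds_def fds_prod_Cons_states by (auto simp: fds_prod_Cons_apply)
qed (simp add: is_fds_def fds_prod_Nil)

section \<open>Rooted linear systems\<close>

definition arrivals :: "'a set \<Rightarrow> ('a \<Rightarrow> 'a) \<Rightarrow> 'a \<Rightarrow> nat \<Rightarrow> nat" where
  "arrivals S f r n = card {x \<in> S. (f ^^ n) x = r}"

definition settling_time :: "'a set \<Rightarrow> ('a \<Rightarrow> 'a) \<Rightarrow> 'a \<Rightarrow> nat" where
  "settling_time S f r = (LEAST n. \<forall>x\<in>S. (f ^^ n) x = r)"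

text \<open>Linear dendrons with the number of rhizomes left free: unlike the class with exactly K
  rhizomes, this class is closed under deleting a branch.\<close>
locale rooted_linear =
  fixes S :: "'a set" and f :: "'a \<Rightarrow> 'a" and r :: 'a
  assumes finite_states: "finite S"
    and maps_to: "x \<in> S \<Longrightarrow> f x \<in> S"
    and root_in: "r \<in> S"
    and root_fixed: "f r = r"
    and reaches_root: "x \<in> S \<Longrightarrow> \<exists>n. (f ^^ n) x = r"
    and linear: "s \<in> S \<Longrightarrow> s \<noteq> r \<Longrightarrow> card {x \<in> S. f x = s} \<le> 1"
begin

lemma is_fds: "is_fds (S, f)"
  using finite_states maps_to by (simp add: is_fds_def)

lemma funpow_in: "x \<in> S \<Longrightarrow> (f ^^ n) x \<in> S"
  by (rule funpow_closed[OF maps_to])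

lemma funpow_root: "(f ^^ n) r = r"
  using funpow_fixed[of f r] root_fixed by simp

lemma stays_at_root: "(f ^^ m) x = r \<Longrightarrow> m \<le> n \<Longrightarrow> (f ^^ n) x = r"
  by (metis funpow_funpow funpow_root le_add_diff_inverse2)

lemma fixpoint_unique:
  assumes "x \<in> S" and "f x = x"
  shows "x = r"
  using reaches_root[OF assms(1)] funpow_fixed[of f x] assms(2) by auto

lemma inj_off_root: "x \<in> S \<Longrightarrow> x' \<in> S \<Longrightarrow> f x = f x' \<Longrightarrow> f x \<noteq> r \<Longrightarrow> x = x'"
  using linear[of "f x"] maps_to finite_states by (auto simp: card_le_Suc0_iff_eq)

lemma reaches_root_within_card:
  assumes "x \<in> S"
  shows "(f ^^ card S) x = r"
proof -
  define d where "d = (LEAST n. (f ^^ n) x = r)"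
  have hit: "(f ^^ d) x = r"
    unfolding d_def by (rule LeastI_ex) (rule reaches_root[OF assms])
  have "\<forall>j<d. (f ^^ j) x \<noteq> r"
    unfolding d_def using not_less_Least by blast
  then have "card ((\<lambda>j. (f ^^ j) x) ` {..d}) = Suc d"
    using card_image[OF inj_on_funpow_until_hit[OF hit]] by simp
  moreover have "(\<lambda>j. (f ^^ j) x) ` {..d} \<subseteq> S"
    using funpow_in[OF assms] by blast
  ultimately have "Suc d \<le> card S"
    using card_mono[OF finite_states] by metis
  then show ?thesis
    using stays_at_root[OF hit] by simp
qed

lemma restrict:
  assumes "S' \<subseteq> S" and "r \<in> S'" and "\<And>x. x \<in> S' \<Longrightarrow> f x \<in> S'"
  shows "rooted_linear S' f r"
proof
  show "card {x \<in> S'. f x = s} \<le> 1" if "s \<in> S'" "s \<noteq> r" for s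
  proof -
    have "card {x \<in> S'. f x = s} \<le> card {x \<in> S. f x = s}"
      using assms(1) finite_states by (intro card_mono) auto
    also have "\<dots> \<le> 1"
      using linear that assms(1) by auto
    finally show ?thesis .
  qed
qed (use assms finite_states root_fixed reaches_root finite_subset in auto)

lemma arrivals_0: "arrivals S f r 0 = 1"
proof -
  have "{x \<in> S. (f ^^ 0) x = r} = {r}"
    using root_in by auto
  then show ?thesis
    by (simp add: arrivals_def)
qed

lemma arrivals_eq_card_iff: "arrivals S f r n = card S \<longleftrightarrow> (\<forall>x\<in>S. (f ^^ n) x = r)"
proof -
  have "card {x \<in> S. (f ^^ n) x = r} = card S \<longleftrightarrow> {x \<in> S. (f ^^ n) x = r} = S"
    using card_subset_eq[OF finite_states, of "{x \<in> S. (f ^^ n) x = r}"] by auto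
  then show ?thesis
    unfolding arrivals_def by blast
qed

lemma all_at_root_settling_time: "x \<in> S \<Longrightarrow> (f ^^ settling_time S f r) x = r"
  unfolding settling_time_def by (rule LeastI2[of _ "card S"]) (auto simp: reaches_root_within_card)

lemma iso_maps_root:
  assumes "rooted_linear S' g r'" and "bij_betw h S S'" and "\<forall>x\<in>S. h (f x) = g (h x)"
  shows "h r = r'"
proof (rule rooted_linear.fixpoint_unique[OF assms(1)])
  show "h r \<in> S'"
    using assms(2) root_in by (auto simp: bij_betw_def)
  show "g (h r) = h r"
    using assms(3) root_in root_fixed by force
qed

end

lemma same_arrivals_same_settling_time:
  assumes A: "rooted_linear S f r" and B: "rooted_linear S' g r'"
    and eq: "\<forall>n. arrivals S f r n = arrivals S' g r' n"
  shows "settling_time S f r = settling_time S' g r'"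
proof -
  interpret A: rooted_linear S f r by (fact A)
  interpret B: rooted_linear S' g r' by (fact B)
  have "arrivals S f r (card S + card S') = card S"
    using A.stays_at_root[OF A.reaches_root_within_card] by (simp add: A.arrivals_eq_card_iff)
  moreover have "arrivals S' g r' (card S + card S') = card S'"
    using B.stays_at_root[OF B.reaches_root_within_card] by (simp add: B.arrivals_eq_card_iff)
  ultimately have "card S = card S'"
    using eq by simp
  then have "arrivals S f r n = card S \<longleftrightarrow> arrivals S' g r' n = card S'" for n
    using eq by simp
  then show ?thesis
    unfolding settling_time_def A.arrivals_eq_card_iff B.arrivals_eq_card_iff by simp
qed

definition branch :: "('a \<Rightarrow> 'a) \<Rightarrow> 'a \<Rightarrow> nat \<Rightarrow> 'a set" where
  "branch f y T = (\<lambda>j. (f ^^ j) y) ` {..<T}"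

locale longest_branch = rooted_linear +
  fixes T :: nat and y :: 'a
  assumes all_at_root: "x \<in> S \<Longrightarrow> (f ^^ T) x = r"
    and start_in: "y \<in> S"
    and late: "(f ^^ (T - 1)) y \<noteq> r"
begin

lemma at_root_iff: "(f ^^ j) y = r \<longleftrightarrow> T \<le> j"
proof
  assume "(f ^^ j) y = r"
  then show "T \<le> j"
    using stays_at_root[of j y "T - 1"] late by (cases "T \<le> j") auto
next
  assume "T \<le> j"
  then show "(f ^^ j) y = r"
    using stays_at_root[OF all_at_root[OF start_in]] by simp
qed

lemma T_pos: "0 < T"
  using at_root_iff[of 0] start_in late by auto

lemma inj_on_branch: "inj_on (\<lambda>j. (f ^^ j) y) {..<T}"
proof -
  have "inj_on (\<lambda>j. (f ^^ j) y) {..T}"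
    by (rule inj_on_funpow_until_hit[where r = r]) (auto simp: at_root_iff)
  then show ?thesis
    by (rule inj_on_subset) auto
qed

lemma root_notin_branch: "r \<notin> branch f y T"
proof
  assume "r \<in> branch f y T"
  then obtain j where "j < T" "(f ^^ j) y = r"
    by (auto simp: branch_def)
  then show False
    using at_root_iff by simp
qed

lemma branch_subset: "branch f y T \<subseteq> S"
  using funpow_in start_in by (auto simp: branch_def)

lemma start_in_branch: "y \<in> branch f y T"
  using T_pos by (auto simp: branch_def intro!: image_eqI[of _ _ 0])

text \<open>The branch is closed under predecessors: its start has none, since a predecessor would
  still be away from the root after \<open>T\<close> steps, and every later point of it has at most one.\<close>
lemma maps_to_remainder:
  assumes x: "x \<in> S - branch f y T"
  shows "f x \<in> S - branch f y T"
proof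
  show "f x \<in> S" using x maps_to by blast
  show "f x \<notin> branch f y T"
  proof
    assume "f x \<in> branch f y T"
    then obtain j where j: "j < T" "f x = (f ^^ j) y"
      by (auto simp: branch_def)
    show False
    proof (cases j)
      case 0
      have "(f ^^ T) x = (f ^^ (T - 1)) (f x)"
        using T_pos by (metis Suc_diff_1 funpow_Suc_right o_apply)
      then show False
        using all_at_root x late j 0 by auto
    next
      case (Suc k)
      have fx: "f x = f ((f ^^ k) y)"
        using j Suc by simp
      have "f x \<noteq> r"
        using j at_root_iff[of j] by simp
      then have "x = (f ^^ k) y"
        using inj_off_root[of x "(f ^^ k) y"] x funpow_in start_in fx by auto
      then show False
        using x j Suc by (auto simp: branch_def)
    qed
  qed
qed

lemma rooted_linear_remainder: "rooted_linear (S - branch f y T) f r"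
  by (rule restrict) (use root_in root_notin_branch maps_to_remainder in auto)

lemma arrivals_remainder:
  "arrivals (S - branch f y T) f r n = arrivals S f r n - card {j \<in> {..<T}. T \<le> n + j}"
proof -
  have "(f ^^ n) ((f ^^ j) y) = r \<longleftrightarrow> T \<le> n + j" for j
    by (simp add: funpow_funpow at_root_iff)
  then have arrived:
    "{x \<in> branch f y T. (f ^^ n) x = r} = (\<lambda>j. (f ^^ j) y) ` {j \<in> {..<T}. T \<le> n + j}"
    unfolding branch_def by auto
  have "card {x \<in> branch f y T. (f ^^ n) x = r} = card {j \<in> {..<T}. T \<le> n + j}"
    unfolding arrived by (rule card_image) (rule inj_on_subset[OF inj_on_branch], auto)
  moreover have "{x \<in> S - branch f y T. (f ^^ n) x = r} =
      {x \<in> S. (f ^^ n) x = r} - {x \<in> branch f y T. (f ^^ n) x = r}"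
    by auto
  moreover have "{x \<in> branch f y T. (f ^^ n) x = r} \<subseteq> {x \<in> S. (f ^^ n) x = r}"
    using branch_subset by auto
  ultimately show ?thesis
    unfolding arrivals_def using finite_states by (simp add: card_Diff_subset finite_subset)
qed

end

lemma (in rooted_linear) longest_branch_exists:
  assumes "0 < settling_time S f r"
  obtains y where "longest_branch S f r (settling_time S f r) y"
proof -
  let ?T = "settling_time S f r"
  have "\<not> (\<forall>x\<in>S. (f ^^ (?T - 1)) x = r)"
    using not_less_Least[of "?T - 1" "\<lambda>n. \<forall>x\<in>S. (f ^^ n) x = r"] assms
    unfolding settling_time_def by auto
  then obtain y where "y \<in> S" "(f ^^ (?T - 1)) y \<noteq> r"
    by blast
  then have "longest_branch S f r ?T y"
    using all_at_root_settling_time rooted_linear_axioms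
    by (simp add: longest_branch_def longest_branch_axioms_def)
  then show ?thesis
    by (rule that)
qed

lemma branch_correspondence:
  assumes A: "longest_branch S f r T y" and B: "longest_branch S' g r' T y'"
  obtains k where "bij_betw k (branch f y T) (branch g y' T)"
    and "\<And>x. x \<in> branch f y T \<Longrightarrow> f x \<in> branch f y T \<Longrightarrow> k (f x) = g (k x)"
    and "\<And>x. x \<in> branch f y T \<Longrightarrow> f x \<notin> branch f y T \<Longrightarrow> f x = r \<and> g (k x) = r'"
proof -
  interpret A: longest_branch S f r T y by (fact A)
  interpret B: longest_branch S' g r' T y' by (fact B)
  define k where "k x = (g ^^ the_inv_into {..<T} (\<lambda>j. (f ^^ j) y) x) y'" for x
  have k_iterate: "k ((f ^^ j) y) = (g ^^ j) y'" if "j < T" for j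
    using the_inv_into_f_f[OF A.inj_on_branch] that by (simp add: k_def)
  have step: "f x \<in> branch f y T \<longleftrightarrow> Suc j < T" if "j < T" and "x = (f ^^ j) y" for x j
    using that A.root_notin_branch A.at_root_iff[of "Suc j"]
    by (cases "Suc j < T") (auto simp: branch_def intro!: image_eqI[of _ _ "Suc j"])
  have "bij_betw k (branch f y T) (branch g y' T)"
    unfolding k_def branch_def
    by (rule bij_betw_the_inv_into_comp[OF A.inj_on_branch B.inj_on_branch])
  moreover have "k (f x) = g (k x)" if x: "x \<in> branch f y T" and fx: "f x \<in> branch f y T" for x
  proof -
    obtain j where j: "j < T" "x = (f ^^ j) y"
      using x by (auto simp: branch_def)
    then show ?thesis
      using step[OF j] fx k_iterate[of j] k_iterate[of "Suc j"] by simp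
  qed
  moreover have "f x = r \<and> g (k x) = r'" if x: "x \<in> branch f y T" and fx: "f x \<notin> branch f y T" for x
  proof -
    obtain j where j: "j < T" "x = (f ^^ j) y"
      using x by (auto simp: branch_def)
    then show ?thesis
      using step[OF j] fx k_iterate[of j] A.at_root_iff[of "Suc j"] B.at_root_iff[of "Suc j"]
      by simp
  qed
  ultimately show ?thesis
    using that by blast
qed

lemma fds_iso_extend_along_branches:
  assumes A: "longest_branch S f r T y" and B: "longest_branch S' g r' T y'"
    and iso: "fds_iso (S - branch f y T, f) (S' - branch g y' T, g)"
  shows "fds_iso (S, f) (S', g)"
proof -
  interpret A: longest_branch S f r T y by (fact A)
  interpret B: longest_branch S' g r' T y' by (fact B)
  obtain h where bij: "bij_betw h (S - branch f y T) (S' - branch g y' T)"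
    and comm: "\<forall>x\<in>S - branch f y T. h (f x) = g (h x)"
    using iso unfolding fds_iso_def by auto
  have root: "h r = r'"
    by (rule rooted_linear.iso_maps_root[OF A.rooted_linear_remainder B.rooted_linear_remainder bij comm])
  obtain k where k: "bij_betw k (branch f y T) (branch g y' T)"
    and k_stay: "\<And>x. x \<in> branch f y T \<Longrightarrow> f x \<in> branch f y T \<Longrightarrow> k (f x) = g (k x)"
    and k_exit: "\<And>x. x \<in> branch f y T \<Longrightarrow> f x \<notin> branch f y T \<Longrightarrow> f x = r \<and> g (k x) = r'"
    using branch_correspondence[OF A B] by blast
  define H where "H x = (if x \<in> branch f y T then k x else h x)" for x
  have "bij_betw H (S - branch f y T) (S' - branch g y' T)"
    using bij by (rule bij_betw_cong[THEN iffD1, rotated]) (simp add: H_def)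
  moreover have "bij_betw H (branch f y T) (branch g y' T)"
    using k by (rule bij_betw_cong[THEN iffD1, rotated]) (simp add: H_def)
  ultimately have
    "bij_betw H ((S - branch f y T) \<union> branch f y T) ((S' - branch g y' T) \<union> branch g y' T)"
    by (rule bij_betw_combine) auto
  then have "bij_betw H S S'"
    using A.branch_subset B.branch_subset by (simp add: Un_absorb2)
  moreover have "H (f x) = g (H x)" if x: "x \<in> S" for x
  proof (cases "x \<in> branch f y T")
    case True
    then show ?thesis
      using k_stay[OF True] k_exit[OF True] A.root_notin_branch root
      by (cases "f x \<in> branch f y T") (auto simp: H_def)
  next
    case False
    then show ?thesis
      using A.maps_to_remainder x comm by (simp add: H_def)
  qed
  ultimately show ?thesis
    unfolding fds_iso_def fst_conv snd_conv by blast
qed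

lemma rooted_linear_iso:
  assumes "rooted_linear S f r" and "rooted_linear S' g r'"
    and "\<forall>n. arrivals S f r n = arrivals S' g r' n"
  shows "fds_iso (S, f) (S', g)"
  using assms
proof (induction "card S" arbitrary: S S' rule: less_induct)
  case less
  interpret A: rooted_linear S f r by (fact less.prems(1))
  interpret B: rooted_linear S' g r' by (fact less.prems(2))
  define T where "T = settling_time S f r"
  have T': "settling_time S' g r' = T"
    unfolding T_def by (rule same_arrivals_same_settling_time[OF less.prems, symmetric])
  show ?case
  proof (cases "T = 0")
    case True
    have "x = r" if "x \<in> S" for x
      using A.all_at_root_settling_time[OF that] True unfolding T_def by simp
    moreover have "x = r'" if "x \<in> S'" for x
      using B.all_at_root_settling_time[OF that] True T' by simp
    ultimately have "S = {r}" and "S' = {r'}"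
      using A.root_in B.root_in by blast+
    then show ?thesis
      unfolding fds_iso_def using B.root_fixed
      by (auto intro!: exI[of _ "\<lambda>_. r'"] simp: bij_betw_def)
  next
    case False
    then have "0 < T"
      by simp
    then obtain y where A': "longest_branch S f r T y"
      unfolding T_def by (rule A.longest_branch_exists)
    obtain y' where B': "longest_branch S' g r' T y'"
      using \<open>0 < T\<close> unfolding T'[symmetric] by (rule B.longest_branch_exists)
    interpret A': longest_branch S f r T y by (fact A')
    interpret B': longest_branch S' g r' T y' by (fact B')
    have "S - branch f y T \<subset> S"
      using A'.start_in_branch A'.start_in by blast
    then have "card (S - branch f y T) < card S"
      using A.finite_states by (simp add: psubset_card_mono)
    moreover have "\<forall>n. arrivals (S - branch f y T) f r n = arrivals (S' - branch g y' T) g r' n"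
      using less.prems(3) by (simp add: A'.arrivals_remainder B'.arrivals_remainder)
    ultimately have "fds_iso (S - branch f y T, f) (S' - branch g y' T, g)"
      using less.hyps A'.rooted_linear_remainder B'.rooted_linear_remainder by blast
    then show ?thesis
      by (rule fds_iso_extend_along_branches[OF A' B'])
  qed
qed

section \<open>Linear dendrons\<close>

text \<open>Once every state is at the root after J steps, root_visits J f r x = J + 1 - d, where d is
  the first time x is at the root; the profile thus lists these hitting times for all states
  outside the preimage of the root.\<close>
definition root_visits :: "nat \<Rightarrow> ('a \<Rightarrow> 'a) \<Rightarrow> 'a \<Rightarrow> 'a \<Rightarrow> nat" where
  "root_visits J f r x = card {j \<in> {1..J}. (f ^^ j) x = r}"

definition visit_profile :: "nat \<Rightarrow> 'a set \<Rightarrow> ('a \<Rightarrow> 'a) \<Rightarrow> 'a \<Rightarrow> nat multiset" where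
  "visit_profile J S f r = image_mset (root_visits J f r) (mset_set {x \<in> S. f x \<noteq> r})"

definition profile_code :: "nat \<Rightarrow> nat \<Rightarrow> 'a set \<Rightarrow> ('a \<Rightarrow> 'a) \<Rightarrow> 'a \<Rightarrow> nat" where
  "profile_code B J S f r = (\<Sum>v\<in>#visit_profile J S f r. B ^ v)"

context rooted_linear
begin

lemma at_root_iff_visits:
  assumes x: "x \<in> S" "x \<noteq> r" and J: "card S \<le> J"
  shows "(f ^^ n) x = r \<longleftrightarrow> J < root_visits J f r x + n"
proof -
  define d where "d = (LEAST n. (f ^^ n) x = r)"
  have hit: "(f ^^ d) x = r"
    unfolding d_def by (rule LeastI_ex) (use reaches_root x in blast)
  have iff: "(f ^^ n) x = r \<longleftrightarrow> d \<le> n" for n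
  proof
    assume "(f ^^ n) x = r"
    then show "d \<le> n"
      unfolding d_def by (rule Least_le)
  next
    assume "d \<le> n"
    then show "(f ^^ n) x = r"
      using stays_at_root[OF hit] by simp
  qed
  have "d \<le> J"
    using iff[of "card S"] reaches_root_within_card[OF x(1)] J by simp
  have "0 < d"
    using iff[of 0] x by auto
  then have "{j \<in> {1..J}. (f ^^ j) x = r} = {d..J}"
    by (auto simp: iff)
  then have "root_visits J f r x = Suc J - d"
    by (simp add: root_visits_def)
  then show ?thesis
    using iff[of n] \<open>d \<le> J\<close> by auto
qed

end

locale rooted_linear_dendron = rooted_linear +
  fixes K :: nat
  assumes rhizomes: "card (predecessors (S, f) r - {r}) = K"
begin

lemma card_root_preds: "card {x \<in> S. f x = r} = K + 1"
proof -
  have "card {x \<in> S. f x = r} = Suc (card ({x \<in> S. f x = r} - {r}))"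
    using finite_states root_in root_fixed by (intro card.remove) auto
  then show ?thesis
    using rhizomes by (simp add: predecessors_def)
qed

lemma indeg_image:
  assumes "x \<in> S"
  shows "indeg (S, f) (f x) = (if f x = r then K + 1 else 1)"
proof -
  have "{x' \<in> S. f x' = f x} = {x}" if "f x \<noteq> r"
    using inj_off_root[of _ x] assms that by auto
  then show ?thesis
    using card_root_preds by (auto simp: indeg_def predecessors_def)
qed

lemma weight_eq:
  assumes x: "x \<in> S"
  shows "weight s c J (S, f) x =
    (if f x = r then (K + 1) ^ s else 1) * ((K + 1) ^ c) ^ root_visits J f r x"
proof -
  have "indeg (S, f) ((f ^^ j) x) ^ c = (if (f ^^ j) x = r then (K + 1) ^ c else 1)"
    if j: "j \<in> {1..J}" for j
  proof -
    obtain i where "j = Suc i"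
      using j by (cases j) auto
    then show ?thesis
      using indeg_image[OF funpow_in[OF x, of i]] by simp
  qed
  then have "(\<Prod>j\<in>{1..J}. indeg (S, f) ((f ^^ j) x) ^ c) =
      (\<Prod>j\<in>{1..J}. if (f ^^ j) x = r then (K + 1) ^ c else 1)"
    by (rule prod.cong[OF refl])
  also have "\<dots> = (\<Prod>j\<in>{j \<in> {1..J}. (f ^^ j) x = r}. (K + 1) ^ c)"
    by (rule prod.inter_filter[symmetric]) simp
  also have "\<dots> = ((K + 1) ^ c) ^ root_visits J f r x"
    by (simp add: root_visits_def)
  finally show ?thesis
    using indeg_image[OF x] by (simp add: weight_def)
qed

lemma phi_eq:
  "phi s c J (S, f) = (K + 1) ^ (s + 1) * ((K + 1) ^ c) ^ J + profile_code ((K + 1) ^ c) J S f r"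
proof -
  let ?B = "(K + 1) ^ c"
  have "phi s c J (S, f) = (\<Sum>x\<in>{x \<in> S. f x = r} \<union> {x \<in> S. f x \<noteq> r}. weight s c J (S, f) x)"
    unfolding phi_def by (rule sum.cong) auto
  also have "\<dots> = (\<Sum>x\<in>{x \<in> S. f x = r}. weight s c J (S, f) x)
      + (\<Sum>x\<in>{x \<in> S. f x \<noteq> r}. weight s c J (S, f) x)"
    by (rule sum.union_disjoint) (use finite_states in auto)
  finally have "phi s c J (S, f) = (\<Sum>x\<in>{x \<in> S. f x = r}. weight s c J (S, f) x)
      + (\<Sum>x\<in>{x \<in> S. f x \<noteq> r}. weight s c J (S, f) x)" .
  moreover have "weight s c J (S, f) x = (K + 1) ^ s * ?B ^ J" if "x \<in> S" "f x = r" for x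
  proof -
    have "{j \<in> {1..J}. (f ^^ j) x = r} = {1..J}"
      using that stays_at_root[of 1 x] by auto
    then show ?thesis
      using weight_eq that by (simp add: root_visits_def)
  qed
  moreover have "weight s c J (S, f) x = ?B ^ root_visits J f r x" if "x \<in> S" "f x \<noteq> r" for x
    using weight_eq that by simp
  moreover have "(\<Sum>x\<in>{x \<in> S. f x \<noteq> r}. ?B ^ root_visits J f r x) = profile_code ?B J S f r"
    by (simp add: profile_code_def visit_profile_def sum_unfold_sum_mset image_mset.compositionality
        o_def)
  ultimately show ?thesis
    using card_root_preds by (simp add: algebra_simps)
qed

lemma arrivals_eq:
  assumes J: "card S \<le> J" and n: "0 < n"
  shows "arrivals S f r n = K + 1 + size (filter_mset (\<lambda>v. J < v + n) (visit_profile J S f r))"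
proof -
  have at_root: "(f ^^ n) x = r \<longleftrightarrow> f x = r \<or> J < root_visits J f r x + n" if x: "x \<in> S" for x
  proof (cases "f x = r")
    case True
    then show ?thesis
      using stays_at_root[of 1 x n] n by simp
  next
    case False
    then have "x \<noteq> r"
      using root_fixed by auto
    then show ?thesis
      using at_root_iff_visits[OF x _ J] False by simp
  qed
  have "arrivals S f r n =
      card ({x \<in> S. f x = r} \<union> {x \<in> {x \<in> S. f x \<noteq> r}. J < root_visits J f r x + n})"
    unfolding arrivals_def using at_root by (intro arg_cong[where f = card]) blast
  also have "\<dots> = card {x \<in> S. f x = r} + card {x \<in> {x \<in> S. f x \<noteq> r}. J < root_visits J f r x + n}"
    by (rule card_Un_disjoint) (use finite_states in auto)
  finally show ?thesis
    using card_root_preds finite_states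
    by (simp add: visit_profile_def image_mset_filter_mset_swap[symmetric])
qed

end

lemma fds_connected_reaches_fixpoint:
  assumes "fds_connected A" and "r \<in> fst A" and "snd A r = r" and "x \<in> fst A"
  shows "\<exists>n. (snd A ^^ n) x = r"
proof -
  let ?E = "fds_arcs A"
  have "(r, x) \<in> (?E \<union> ?E\<inverse>)\<^sup>*"
    using assms(1,2,4) unfolding fds_connected_def by blast
  then show ?thesis
  proof (induction rule: rtrancl_induct)
    case base
    show ?case
      by (rule exI[of _ 0]) simp
  next
    case (step u v)
    then obtain n where n: "(snd A ^^ n) u = r"
      by blast
    from step.hyps(2) show ?case
    proof
      assume "(u, v) \<in> ?E"
      then have "(snd A ^^ n) v = snd A ((snd A ^^ n) u)"
        by (auto simp: fds_arcs_def funpow_swap1)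
      then show ?case
        using n assms(3) by auto
    next
      assume "(u, v) \<in> ?E\<inverse>"
      then have "(snd A ^^ Suc n) v = (snd A ^^ n) u"
        by (auto simp: fds_arcs_def funpow_swap1)
      then show ?case
        using n by blast
    qed
  qed
qed

lemma linear_dendron_rooted:
  assumes "linear_dendron K A"
  obtains r where "rooted_linear_dendron (fst A) (snd A) r K"
proof -
  obtain r where fds: "is_fds A" and conn: "fds_connected A"
    and r: "r \<in> fst A" "snd A r = r"
    and linear: "\<forall>s\<in>fst A. s \<noteq> r \<longrightarrow> card (predecessors A s) \<le> 1"
    and rhizomes: "card (predecessors A r - {r}) = K"
    using assms unfolding linear_dendron_def dendron_def by blast
  have "rooted_linear_dendron (fst A) (snd A) r K"
    using fds r linear rhizomes fds_connected_reaches_fixpoint[OF conn r]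
    by unfold_locales (auto simp: is_fds_def predecessors_def)
  then show ?thesis
    by (rule that)
qed

lemma phi_fds_prod_rooted_linear_dendrons:
  fixes r :: "'a fds \<Rightarrow> 'a"
  assumes "\<forall>F\<in>set Fs. rooted_linear_dendron (fst F) (snd F) (r F) K"
  shows "phi s c J (fds_prod Fs) =
    (\<Prod>v\<in>#mset (map (\<lambda>F. profile_code ((K + 1) ^ c) J (fst F) (snd F) (r F)) Fs).
      (K + 1) ^ (s + 1) * ((K + 1) ^ c) ^ J + v)"
    (is "_ = (\<Prod>v\<in>#mset (map ?code Fs). ?X + v)")
proof -
  have "map (phi s c J) Fs = map (\<lambda>F. ?X + ?code F) Fs"
    using rooted_linear_dendron.phi_eq assms by fastforce
  then have "phi s c J (fds_prod Fs) = (\<Prod>F\<leftarrow>Fs. ?X + ?code F)"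
    unfolding phi_fds_prod by (rule arg_cong)
  also have "\<dots> = (\<Prod>v\<in>#mset (map ?code Fs). ?X + v)"
    by (induction Fs) auto
  finally show ?thesis .
qed

section \<open>Recovering multisets of naturals\<close>

lemma base_expansion_unique:
  fixes a b :: "nat \<Rightarrow> nat"
  assumes "\<And>v. a v < B" and "\<And>v. b v < B"
    and "(\<Sum>v\<le>J. a v * B ^ v) = (\<Sum>v\<le>J. b v * B ^ v)" and "v \<le> J"
  shows "a v = b v"
  using assms
proof (induction J arbitrary: a b v)
  case (Suc J)
  have split: "(\<Sum>v\<le>Suc J. c v * B ^ v) = c 0 + B * (\<Sum>v\<le>J. c (Suc v) * B ^ v)" for c :: "nat \<Rightarrow> nat"
    unfolding sum.atMost_Suc_shift by (simp add: sum_distrib_left algebra_simps)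
  have eq: "a 0 + B * (\<Sum>v\<le>J. a (Suc v) * B ^ v) = b 0 + B * (\<Sum>v\<le>J. b (Suc v) * B ^ v)"
    using Suc.prems(3) unfolding split .
  then have "(a 0 + B * (\<Sum>v\<le>J. a (Suc v) * B ^ v)) mod B =
      (b 0 + B * (\<Sum>v\<le>J. b (Suc v) * B ^ v)) mod B"
    by simp
  then have zero: "a 0 = b 0"
    using Suc.prems(1,2) by simp
  moreover have "0 < B"
    using Suc.prems(1)[of 0] by simp
  then have "(\<Sum>v\<le>J. a (Suc v) * B ^ v) = (\<Sum>v\<le>J. b (Suc v) * B ^ v)"
    using eq zero by simp
  then have "a (Suc i) = b (Suc i)" if "i \<le> J" for i
    using Suc.IH[of "a \<circ> Suc" "b \<circ> Suc" i] Suc.prems(1,2) that by simp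
  ultimately show ?case
    using Suc.prems(4) by (cases v) auto
qed simp

lemma sum_mset_eq_sum_count:
  fixes g :: "nat \<Rightarrow> nat"
  assumes "set_mset M \<subseteq> {..J}"
  shows "(\<Sum>v\<in>#M. g v) = (\<Sum>v\<le>J. count M v * g v)"
  using assms
proof (induction M)
  case (add a M)
  have "(\<Sum>v\<le>J. count (add_mset a M) v * g v) = (\<Sum>v\<le>J. count M v * g v + (if v = a then g v else 0))"
    by (rule sum.cong) auto
  also have "\<dots> = (\<Sum>v\<le>J. count M v * g v) + g a"
    using add.prems by (simp add: sum.distrib)
  finally show ?case
    using add by simp
qed simp

lemma mset_base_expansion_inj:
  fixes M N :: "nat multiset"
  assumes "size M < B" and "size N < B" and "(\<Sum>v\<in>#M. B ^ v) = (\<Sum>v\<in>#N. B ^ v)"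
  shows "M = N"
proof (rule multiset_eqI)
  fix v
  define J where "J = v + Max (insert 0 (set_mset (M + N)))"
  have "w \<le> J" if "w \<in># M + N" for w
    unfolding J_def using that by (intro trans_le_add2 Max_ge) auto
  then have "set_mset M \<subseteq> {..J}" and "set_mset N \<subseteq> {..J}"
    by auto
  then have "(\<Sum>v\<le>J. count M v * B ^ v) = (\<Sum>v\<le>J. count N v * B ^ v)"
    using assms(3) sum_mset_eq_sum_count[of M J "\<lambda>v. B ^ v"]
      sum_mset_eq_sum_count[of N J "\<lambda>v. B ^ v"]
    by simp
  moreover have "count M w < B" and "count N w < B" for w
    using assms(1,2) count_le_size[of M w] count_le_size[of N w] by linarith+
  ultimately show "count M v = count N v"
    using base_expansion_unique[of "count M" B "count N" J v] J_def by simp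
qed

lemma order_prod_linear_factors:
  "order (- int v) (\<Prod>w\<in>#L. [:int w, 1:]) = count L v"
proof (induction L)
  case empty
  then show ?case
    by (simp add: order_0I)
next
  case (add a L)
  have "order (- int v) [:int a, 1:] = (if a = v then 1 else 0)"
    using order_power_n_n[of "- int v" 1] order_0I[of "[:int a, 1:]" "- int v"] by auto
  moreover have "order (- int v) ([:int a, 1:] * (\<Prod>w\<in>#L. [:int w, 1:])) =
      order (- int v) [:int a, 1:] + order (- int v) (\<Prod>w\<in>#L. [:int w, 1:])"
    by (rule order_mult) (auto simp: prod_mset_zero_iff simp del: mult_pCons_left)
  ultimately show ?case
    using add.IH by simp
qed

lemma mset_eq_if_shifted_prods_eq:
  fixes M N :: "nat multiset"
  assumes "infinite {x. (\<Prod>v\<in>#M. x + v) = (\<Prod>v\<in>#N. x + v)}"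
  shows "M = N"
proof -
  define p :: "nat multiset \<Rightarrow> int poly" where "p L = (\<Prod>v\<in>#L. [:int v, 1:])" for L
  have poly_p: "poly (p L) (int x) = int (\<Prod>v\<in>#L. x + v)" for L x
    by (induction L) (simp_all add: p_def algebra_simps)
  have "p M = p N"
  proof (rule ccontr)
    assume "p M \<noteq> p N"
    then have "finite {z. poly (p M - p N) z = 0}"
      by (intro poly_roots_finite) simp
    moreover have "int ` {x. (\<Prod>v\<in>#M. x + v) = (\<Prod>v\<in>#N. x + v)} \<subseteq> {z. poly (p M - p N) z = 0}"
      by (auto simp: poly_p)
    ultimately have "finite (int ` {x. (\<Prod>v\<in>#M. x + v) = (\<Prod>v\<in>#N. x + v)})"
      by (rule finite_subset[rotated])
    then show False
      using assms by (simp add: finite_image_iff)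
  qed
  then show ?thesis
    using order_prod_linear_factors unfolding p_def by (intro multiset_eqI) metis
qed

lemma profile_codes_eq_if_iso:
  fixes Fs :: "'a fds list" and Gs :: "'b fds list"
    and rF :: "'a fds \<Rightarrow> 'a" and rG :: "'b fds \<Rightarrow> 'b"
  assumes K: "K \<ge> 1"
    and Fs: "\<forall>F\<in>set Fs. rooted_linear_dendron (fst F) (snd F) (rF F) K"
    and Gs: "\<forall>G\<in>set Gs. rooted_linear_dendron (fst G) (snd G) (rG G) K"
    and iso: "fds_iso (fds_prod Fs) (fds_prod Gs)"
  shows "mset (map (\<lambda>F. profile_code ((K + 1) ^ c) J (fst F) (snd F) (rF F)) Fs) =
    mset (map (\<lambda>G. profile_code ((K + 1) ^ c) J (fst G) (snd G) (rG G)) Gs)"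
    (is "?MF = ?MG")
proof (rule mset_eq_if_shifted_prods_eq)
  define X where "X s = (K + 1) ^ (s + 1) * ((K + 1) ^ c) ^ J" for s
  have "is_fds (fds_prod Fs)"
    using Fs rooted_linear.is_fds rooted_linear_dendron.axioms(1)
    by (intro is_fds_fds_prod) fastforce
  then have "phi s c J (fds_prod Fs) = phi s c J (fds_prod Gs)" for s
    using iso by (rule phi_iso)
  then have "range X \<subseteq> {x. (\<Prod>v\<in>#?MF. x + v) = (\<Prod>v\<in>#?MG. x + v)}"
    unfolding X_def
    using phi_fds_prod_rooted_linear_dendrons[OF Fs] phi_fds_prod_rooted_linear_dendrons[OF Gs]
    by auto
  moreover have "inj X"
  proof (rule injI)
    fix s t
    assume "X s = X t"
    then have "(K + 1) ^ (s + 1) = (K + 1) ^ (t + 1)"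
      unfolding X_def using mult_right_cancel[of "((K + 1) ^ c) ^ J"] by simp
    then show "s = t"
      using K power_inject_exp[of "K + 1" "s + 1" "t + 1"] by linarith
  qed
  ultimately show "infinite {x. (\<Prod>v\<in>#?MF. x + v) = (\<Prod>v\<in>#?MG. x + v)}"
    using range_inj_infinite infinite_super by blast
qed

lemma fds_iso_if_profile_codes_eq:
  assumes F: "rooted_linear_dendron S f r K" and G: "rooted_linear_dendron S' g r' K"
    and K: "K \<ge> 1" and J: "card S < J" "card S' < J"
    and eq: "profile_code ((K + 1) ^ J) J S f r = profile_code ((K + 1) ^ J) J S' g r'"
  shows "fds_iso (S, f) (S', g)"
proof -
  interpret F: rooted_linear_dendron S f r K by (fact F)
  interpret G: rooted_linear_dendron S' g r' K by (fact G)
  have "J < (K + 1) ^ J"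
    using less_exp[of J] power_mono[of 2 "K + 1" J] K by linarith
  then have "size (visit_profile J S f r) < (K + 1) ^ J"
    and "size (visit_profile J S' g r') < (K + 1) ^ J"
    using J F.finite_states G.finite_states card_mono[of S "{x \<in> S. f x \<noteq> r}"]
      card_mono[of S' "{x \<in> S'. g x \<noteq> r'}"]
    by (auto simp: visit_profile_def)
  then have "visit_profile J S f r = visit_profile J S' g r'"
    using eq unfolding profile_code_def by (rule mset_base_expansion_inj)
  then have "arrivals S f r n = arrivals S' g r' n" for n
    using J F.arrivals_eq[of J] G.arrivals_eq[of J]
    by (cases n) (simp_all add: F.arrivals_0 G.arrivals_0)
  then show ?thesis
    by (intro rooted_linear_iso[OF F.rooted_linear_axioms G.rooted_linear_axioms] allI)
qed

lemma linear_dendrons_rooted: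
  assumes "\<forall>F\<in>set Fs. linear_dendron K F"
  obtains r where "\<forall>F\<in>set Fs. rooted_linear_dendron (fst F) (snd F) (r F) K"
proof -
  have "\<forall>F\<in>set Fs. \<exists>r. rooted_linear_dendron (fst F) (snd F) r K"
    using assms linear_dendron_rooted by blast
  from bchoice[OF this] obtain r where "\<forall>F\<in>set Fs. rooted_linear_dendron (fst F) (snd F) (r F) K"
    by blast
  then show ?thesis
    by (rule that)
qed

lemma matching_if_mset_map_eq:
  assumes "mset (map a xs) = mset (map b ys)"
    and "\<And>x y. x \<in> set xs \<Longrightarrow> y \<in> set ys \<Longrightarrow> a x = b y \<Longrightarrow> R x y"
  shows "length xs = length ys \<and>
    (\<exists>\<sigma>. bij_betw \<sigma> {..<length xs} {..<length ys} \<and> (\<forall>i<length xs. R (xs ! i) (ys ! \<sigma> i)))"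
proof -
  obtain \<sigma> where \<sigma>: "bij_betw \<sigma> {..<length xs} {..<length ys}"
    and eq: "\<forall>i<length xs. map a xs ! i = map b ys ! \<sigma> i"
    using permutation_Ex_bij[OF assms(1)] unfolding length_map by blast
  have "R (xs ! i) (ys ! \<sigma> i)" if "i < length xs" for i
  proof -
    have "\<sigma> i < length ys"
      using \<sigma> that by (auto simp: bij_betw_def)
    then show ?thesis
      using assms(2) eq that by simp
  qed
  then show ?thesis
    using \<sigma> mset_eq_length[OF assms(1)] by auto
qed

theorem mainTheorem5:
  fixes K :: nat and Fs :: "'a fds list" and Gs :: "'b fds list"
  assumes "K \<ge> 1"
    and "\<forall>F\<in>set Fs. linear_dendron K F"
    and "\<forall>G\<in>set Gs. linear_dendron K G"
    and "fds_iso (fds_prod Fs) (fds_prod Gs)"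
  shows "length Fs = length Gs \<and>
    (\<exists>\<sigma>. bij_betw \<sigma> {..<length Fs} {..<length Gs} \<and>
        (\<forall>i<length Fs. fds_iso (Fs ! i) (Gs ! \<sigma> i)))"
proof -
  obtain rF where rF: "\<forall>F\<in>set Fs. rooted_linear_dendron (fst F) (snd F) (rF F) K"
    using assms(2) by (rule linear_dendrons_rooted)
  obtain rG where rG: "\<forall>G\<in>set Gs. rooted_linear_dendron (fst G) (snd G) (rG G) K"
    using assms(3) by (rule linear_dendrons_rooted)
  define J where "J = Suc (\<Sum>F\<leftarrow>Fs. card (fst F)) + (\<Sum>G\<leftarrow>Gs. card (fst G))"
  have JF: "card (fst F) < J" if "F \<in> set Fs" for F
    using member_le_sum_list[of "card (fst F)" "map (\<lambda>F. card (fst F)) Fs"] that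
    by (auto simp: J_def)
  have JG: "card (fst G) < J" if "G \<in> set Gs" for G
    using member_le_sum_list[of "card (fst G)" "map (\<lambda>G. card (fst G)) Gs"] that
    by (auto simp: J_def)
  show ?thesis
  proof (rule matching_if_mset_map_eq)
    show "mset (map (\<lambda>F. profile_code ((K + 1) ^ J) J (fst F) (snd F) (rF F)) Fs) =
        mset (map (\<lambda>G. profile_code ((K + 1) ^ J) J (fst G) (snd G) (rG G)) Gs)"
      by (rule profile_codes_eq_if_iso[OF assms(1) rF rG assms(4)])
    show "fds_iso F G"
      if "F \<in> set Fs" and "G \<in> set Gs"
        and "profile_code ((K + 1) ^ J) J (fst F) (snd F) (rF F) =
          profile_code ((K + 1) ^ J) J (fst G) (snd G) (rG G)"
      for F G
      using fds_iso_if_profile_codes_eq[of "fst F" "snd F" "rF F" K "fst G" "snd G" "rG G" J]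
        that rF rG JF JG assms(1) by simp
  qed
qed

end
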